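(* Let $\hat{\mathbb S}^2$ denote $\mathbb S^2$ with the antipodal involution $k\mapsto -k$, let $U(2)$ carry the involution $\mu(U)=-Q\bar UQ$ with $Q=\begin{pmatrix}0&-1\\1&0\end{pmatrix}$, and $U(1)$ the involution $z\mapsto\bar z$. Then the determinant $\det:U(2)\to U(1)$ induces a group isomorphism $$\det:[\hat{\mathbb S}^2,U(2)]_{\mathbb Z_2}\longrightarrow[\hat{\mathbb S}^2,U(1)]_{\mathbb Z_2}\cong\mathbb Z_2,$$ where the latter group is generated by the classes of the constant maps $\pm1$.
   Context: For involutive spaces $(A,\alpha)$, $(B,\beta)$, $[A,B]_{\mathbb Z_2}$ denotes the set of equivariant maps $f:A\to B$ ($f\circ\alpha=\beta\circ f$) modulo homotopy through equivariant maps; when $B$ is a group with involution acting by group automorphisms, it is a group under pointwise multiplication. *)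

theory Defs
  imports "HOL-Analysis.Analysis"
begin

definition S2 :: "(real^3) set" where "S2 = sphere 0 1"
definition antip :: "real^3 \<Rightarrow> real^3" where "antip k = - k"

definition mconj :: "complex^2^2 \<Rightarrow> complex^2^2" where
  "mconj U = (\<chi> i j. cnj (U $ i $ j))"
definition adj :: "complex^2^2 \<Rightarrow> complex^2^2" where
  "adj U = transpose (mconj U)"

definition U2 :: "(complex^2^2) set" where
  "U2 = {U. U ** adj U = mat 1 \<and> adj U ** U = mat 1}"
definition U1 :: "complex set" where "U1 = {z. cmod z = 1}"

definition Qm :: "complex^2^2" where
  "Qm = vector [vector [0, -1], vector [1, 0]]"

definition mu :: "complex^2^2 \<Rightarrow> complex^2^2" where
  "mu U = - (Qm ** mconj U ** Qm)"

definition EqMaps :: "'a::topological_space set \<Rightarrow> ('a \<Rightarrow> 'a) \<Rightarrow> 'b::topological_space set \<Rightarrow> ('b \<Rightarrow> 'b) \<Rightarrow> ('a \<Rightarrow> 'b) set" where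
  "EqMaps A a B b = {f. continuous_on A f \<and> f ` A \<subseteq> B \<and> (\<forall>x\<in>A. f (a x) = b (f x))}"

definition eq_htpc :: "'a::topological_space set \<Rightarrow> ('a \<Rightarrow> 'a) \<Rightarrow> 'b::topological_space set \<Rightarrow> ('b \<Rightarrow> 'b) \<Rightarrow> ('a \<Rightarrow> 'b) \<Rightarrow> ('a \<Rightarrow> 'b) \<Rightarrow> bool" where
  "eq_htpc A a B b f g \<longleftrightarrow> homotopic_with_canon (\<lambda>h. \<forall>x\<in>A. h (a x) = b (h x)) A B f g"

end

theory Submission
  imports Defs
begin

(*
  1. Equivariant homotopies are described by explicit maps H on [0,1] x A; equivariant
     homotopy is transitive, symmetric, and is preserved by pointwise post-composition
     with equivariant continuous operations (eq_htpc_pointwise).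
  2. U(1): on a connected Borsukian space with involution a, an equivariant circle map
     h = exp(i theta) satisfies theta(a x) + theta x = 2 pi n for a fixed integer n, and the
     straight-line homotopy of theta deforms h equivariantly to the constant (-1)^n.
     Lifting a homotopy on [0,1] x S shows that the parity of n is an invariant, so the
     constants 1 and -1 are not equivariantly homotopic.
  3. U(2): det turns mu into complex conjugation, so it induces a homomorphism; the
     Pauli map k |-> k.sigma has determinant -1, so det is surjective on classes.
  4. Injectivity: for f, g with equivariantly homotopic determinants, F = f g^* has
     det F homotopic to 1. Rotating F by the scalar exp(-i phi/2), where det F = exp(i phi)
     with phi odd, yields an SU(2)-valued map G with G(-k) = G(k). Via SU(2) = S^3 this is an
     even map S^2 -> S^3, which is null-homotopic through even maps: an even smooth
     approximation misses a point of S^3 (its image is negligible) and is then contracted.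
*)

lemma homotopic_with_canon_explicit:
  assumes "\<And>h k. (\<And>x. x \<in> S \<Longrightarrow> h x = k x) \<Longrightarrow> P h \<longleftrightarrow> P k"
  shows "homotopic_with_canon P S T f g \<longleftrightarrow>
    (\<exists>H. continuous_on ({0..1::real} \<times> S) H \<and> H ` ({0..1::real} \<times> S) \<subseteq> T
       \<and> (\<forall>x\<in>S. H(0,x) = f x) \<and> (\<forall>x\<in>S. H(1,x) = g x) \<and> (\<forall>t\<in>{0..1::real}. P (\<lambda>x. H(t,x))))"
proof -
  have "homotopic_with_canon P S T f g \<longleftrightarrow>
    (\<exists>h. continuous_map (prod_topology (subtopology euclideanreal {0..1}) (top_of_set S)) (top_of_set T) h \<and>
       (\<forall>x \<in> topspace (top_of_set S). h(0,x) = f x) \<and>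
       (\<forall>x \<in> topspace (top_of_set S). h(1,x) = g x) \<and>
       (\<forall>t \<in> {0..1}. P(\<lambda>x. h(t, x))))"
    by (rule homotopic_with, rule assms, auto)
  then show ?thesis
    by (simp add: continuous_map_subtopology_eu image_subset_iff_funcset)
qed

lemma eq_htpc_explicit:
  assumes inv: "a ` A \<subseteq> A"
  shows "eq_htpc A a B b f g \<longleftrightarrow>
    (\<exists>H. continuous_on ({0..1::real} \<times> A) H \<and> H ` ({0..1::real} \<times> A) \<subseteq> B
       \<and> (\<forall>x\<in>A. H(0,x) = f x) \<and> (\<forall>x\<in>A. H(1,x) = g x)
       \<and> (\<forall>t\<in>{0..1::real}. \<forall>x\<in>A. H(t, a x) = b (H(t,x))))"
  unfolding eq_htpc_def
  by (subst homotopic_with_canon_explicit) (use inv in \<open>auto simp: image_subset_iff\<close>)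

lemma eq_htpcI:
  assumes "a ` A \<subseteq> A"
    and "continuous_on ({0..1::real} \<times> A) H" "H ` ({0..1::real} \<times> A) \<subseteq> B"
    and "\<forall>x\<in>A. H(0,x) = f x" "\<forall>x\<in>A. H(1,x) = g x"
    and "\<forall>t\<in>{0..1::real}. \<forall>x\<in>A. H(t, a x) = b (H(t,x))"
  shows "eq_htpc A a B b f g"
  unfolding eq_htpc_explicit[OF assms(1)] using assms(2-) by (intro exI[where x = H]) simp

lemma eq_htpcE:
  assumes "a ` A \<subseteq> A" and "eq_htpc A a B b f g"
  obtains H where "continuous_on ({0..1::real} \<times> A) H" "H ` ({0..1::real} \<times> A) \<subseteq> B"
    "\<forall>x\<in>A. H(0,x) = f x" "\<forall>x\<in>A. H(1,x) = g x"
    "\<forall>t\<in>{0..1::real}. \<forall>x\<in>A. H(t, a x) = b (H(t,x))"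
  using assms(2) unfolding eq_htpc_explicit[OF assms(1)] by (elim exE conjE) (rule that)

lemma eq_htpc_trans: "eq_htpc A a B b f g \<Longrightarrow> eq_htpc A a B b g h \<Longrightarrow> eq_htpc A a B b f h"
  unfolding eq_htpc_def by (rule homotopic_with_trans)

lemma eq_htpc_sym: "eq_htpc A a B b f g \<Longrightarrow> eq_htpc A a B b g f"
  unfolding eq_htpc_def by (rule homotopic_with_symD)

lemma eq_htpc_cong:
  assumes inv: "a ` A \<subseteq> A" and htp: "eq_htpc A a B b f g"
    and "\<And>x. x \<in> A \<Longrightarrow> f x = f' x" "\<And>x. x \<in> A \<Longrightarrow> g x = g' x"
  shows "eq_htpc A a B b f' g'"
proof -
  obtain H where H: "continuous_on ({0..1::real} \<times> A) H" "H ` ({0..1::real} \<times> A) \<subseteq> B"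
    "\<forall>x\<in>A. H(0,x) = f x" "\<forall>x\<in>A. H(1,x) = g x" "\<forall>t\<in>{0..1::real}. \<forall>x\<in>A. H(t, a x) = b (H(t,x))"
    using htp by (rule eq_htpcE[OF inv])
  show ?thesis
    by (rule eq_htpcI[OF inv H(1,2) _ _ H(5)]) (use H(3,4) assms(3,4) in auto)
qed

lemma continuous_on_compose_fst: "continuous_on A g \<Longrightarrow> continuous_on (A \<times> B) (\<lambda>z. g (fst z))"
  by (rule continuous_on_compose2[OF _ continuous_on_fst]) auto

lemma continuous_on_compose_snd: "continuous_on B g \<Longrightarrow> continuous_on (A \<times> B) (\<lambda>z. g (snd z))"
  by (rule continuous_on_compose2[OF _ continuous_on_snd]) auto

lemma eq_htpc_pointwise:
  assumes inv: "a ` A \<subseteq> A" and htp: "eq_htpc A a B b f g"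
    and m_cont: "continuous_on (A \<times> B) (\<lambda>z. m (fst z) (snd z))"
    and m_into: "\<And>x y. x \<in> A \<Longrightarrow> y \<in> B \<Longrightarrow> m x y \<in> C"
    and m_equiv: "\<And>x y. x \<in> A \<Longrightarrow> y \<in> B \<Longrightarrow> m (a x) (b y) = c (m x y)"
  shows "eq_htpc A a C c (\<lambda>x. m x (f x)) (\<lambda>x. m x (g x))"
proof -
  obtain H where H: "continuous_on ({0..1::real} \<times> A) H" "H ` ({0..1::real} \<times> A) \<subseteq> B"
    "\<forall>x\<in>A. H(0,x) = f x" "\<forall>x\<in>A. H(1,x) = g x" "\<forall>t\<in>{0..1::real}. \<forall>x\<in>A. H(t, a x) = b (H(t,x))"
    using htp by (rule eq_htpcE[OF inv])
  have HB: "H (t, x) \<in> B" if "t \<in> {0..1}" "x \<in> A" for t x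
    using H(2) that by blast
  have pair_cont: "continuous_on ({0..1::real} \<times> A) (\<lambda>z. (snd z, H z))"
    by (intro continuous_intros H(1))
  have pair_into: "(\<lambda>z. (snd z, H z)) ` ({0..1::real} \<times> A) \<subseteq> A \<times> B"
    using H(2) by auto
  show ?thesis
  proof (rule eq_htpcI[OF inv, where H = "\<lambda>z. m (snd z) (H z)"])
    show "continuous_on ({0..1::real} \<times> A) (\<lambda>z. m (snd z) (H z))"
      using continuous_on_compose2[OF m_cont pair_cont pair_into] by simp
    show "(\<lambda>z. m (snd z) (H z)) ` ({0..1::real} \<times> A) \<subseteq> C"
      using HB m_into by auto
    show "\<forall>t\<in>{0..1::real}. \<forall>x\<in>A. m (snd (t, a x)) (H (t, a x)) = c (m (snd (t, x)) (H (t, x)))"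
      using HB H(5) m_equiv by auto
  qed (use H(3,4) in auto)
qed

lemma integer_valued_constant:
  fixes f :: "'a::topological_space \<Rightarrow> real"
  assumes "connected S" "continuous_on S f" "\<And>x. x \<in> S \<Longrightarrow> f x \<in> \<int>" "x \<in> S" "y \<in> S"
  shows "f x = f y"
proof -
  have "f constant_on S"
  proof (rule continuous_discrete_range_constant[OF assms(1,2)])
    fix x assume x: "x \<in> S"
    show "\<exists>e>0. \<forall>y. y \<in> S \<and> f y \<noteq> f x \<longrightarrow> e \<le> norm (f y - f x)"
    proof (intro exI[of _ 1] conjI allI impI)
      fix y assume y: "y \<in> S \<and> f y \<noteq> f x"
      then have "f y - f x \<in> \<int>" "f y - f x \<noteq> 0" using assms(3) x by auto
      then show "1 \<le> norm (f y - f x)"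
        by (metis Ints_cases Ints_nonzero_abs_ge1 real_norm_def)
    qed simp
  qed
  then show ?thesis using assms(4,5) by (auto simp: constant_on_def)
qed

lemma circle_lift:
  fixes S :: "'a::real_normed_vector set"
  assumes "Borsukian S" and "continuous_on S h" "h ` S \<subseteq> U1"
  obtains \<theta> where "continuous_on S \<theta>" "\<And>x. x \<in> S \<Longrightarrow> h x = exp(\<i> * of_real (\<theta> x))"
proof -
  have "h \<in> S \<rightarrow> sphere 0 1" using assms(3) by (auto simp: U1_def)
  then obtain g where g: "continuous_on S (complex_of_real \<circ> g)" "\<forall>x\<in>S. h x = exp(\<i> * of_real (g x))"
    using Borsukian_continuous_logarithm_circle_real[THEN iffD1, OF assms(1)] assms(2) by blast
  have "continuous_on S (\<lambda>x. Re ((complex_of_real \<circ> g) x))"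
    by (intro continuous_intros g)
  then show ?thesis using g that by simp
qed

lemma circle_lift_of_constant:
  assumes "connected S" "continuous_on S \<theta>" "\<And>x. x \<in> S \<Longrightarrow> exp (\<i> * of_real (\<theta> x)) = c"
    and "x \<in> S" "y \<in> S"
  shows "\<theta> x = \<theta> y"
proof -
  define s where "s z = (\<theta> z - \<theta> y) / (2*pi)" for z
  have "s z \<in> \<int>" if z: "z \<in> S" for z
  proof -
    have "exp (\<i> * of_real (\<theta> z - \<theta> y)) = exp (\<i> * of_real (\<theta> z)) / exp (\<i> * of_real (\<theta> y))"
      by (simp add: exp_diff[symmetric] algebra_simps)
    also have "\<dots> = c / c" using assms(3)[OF z] assms(3)[OF assms(5)] by simp
    also have "\<dots> = 1" using assms(3)[OF assms(5)] by (metis divide_self exp_not_eq_zero)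
    finally obtain m :: int where "\<theta> z - \<theta> y = 2 * m * pi" by (auto simp: exp_eq_1)
    then show ?thesis by (simp add: s_def)
  qed
  moreover have "continuous_on S s" unfolding s_def by (intro continuous_intros assms(2)) auto
  ultimately have "s x = s y" using integer_valued_constant[OF assms(1)] assms(4,5) by blast
  then show ?thesis by (simp add: s_def)
qed

lemma equivariant_circle_lift:
  fixes S :: "'a::real_normed_vector set"
  assumes conn: "connected S" and bors: "Borsukian S"
    and a_cont: "continuous_on S a" and a_inv: "a ` S \<subseteq> S"
    and h: "h \<in> EqMaps S a U1 cnj"
  obtains \<theta> and n :: int where "continuous_on S \<theta>" "\<And>x. x \<in> S \<Longrightarrow> h x = exp(\<i> * of_real (\<theta> x))"
    "\<And>x. x \<in> S \<Longrightarrow> \<theta> (a x) + \<theta> x = 2 * pi * n"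
proof -
  have hc: "continuous_on S h" "h ` S \<subseteq> U1" and he: "\<And>x. x \<in> S \<Longrightarrow> h (a x) = cnj (h x)"
    using h by (auto simp: EqMaps_def)
  obtain \<theta> where th: "continuous_on S \<theta>" "\<And>x. x \<in> S \<Longrightarrow> h x = exp(\<i> * of_real (\<theta> x))"
    using circle_lift[OF bors hc] by blast
  define s where "s x = (\<theta> (a x) + \<theta> x) / (2*pi)" for x
  have s_int: "s x \<in> \<int>" if x: "x \<in> S" for x
  proof -
    have "exp (\<i> * of_real (\<theta> (a x))) = exp (- (\<i> * of_real (\<theta> x)))"
      using he[OF x] th(2)[OF x] th(2)[of "a x"] a_inv x by (auto simp: exp_cnj)
    then have "exp (\<i> * of_real (\<theta> (a x)) + \<i> * of_real (\<theta> x)) = 1"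
      by (simp add: exp_add exp_minus)
    then obtain m :: int where "\<theta> (a x) + \<theta> x = 2 * m * pi"
      by (auto simp: exp_eq_1 algebra_simps)
    then show ?thesis by (simp add: s_def)
  qed
  have "continuous_on S (\<lambda>x. \<theta> (a x))"
    by (rule continuous_on_compose2[OF th(1) a_cont]) (use a_inv in auto)
  then have s_cont: "continuous_on S s" unfolding s_def by (intro continuous_intros th(1)) auto
  obtain n :: int where n: "\<And>x. x \<in> S \<Longrightarrow> s x = n"
  proof (cases "S = {}")
    case False
    then obtain x0 where x0: "x0 \<in> S" by blast
    then obtain n :: int where "s x0 = n" using s_int Ints_cases by blast
    then show ?thesis
      using that integer_valued_constant[OF conn s_cont s_int _ x0] by metis
  qed simp
  show ?thesis
  proof (rule that[OF th])
    fix x assume "x \<in> S"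
    then have "(\<theta> (a x) + \<theta> x) / (2*pi) = n" using n by (simp add: s_def)
    then show "\<theta> (a x) + \<theta> x = 2 * pi * n" by (simp add: field_simps)
  qed
qed

lemma exp_i_pi_int: "exp (\<i> * of_real (pi * of_int n)) = (if even n then 1 else -1)"
proof (cases "even n")
  case True
  then obtain m where m: "n = 2*m" by blast
  have "exp (\<i> * of_real (pi * of_int n)) = exp((2 * of_int m * pi) * \<i>)"
    by (rule arg_cong[where f=exp]) (simp add: m)
  also have "\<dots> = 1" by (rule exp_integer_2pi) simp
  finally show ?thesis using True by simp
next
  case False
  then obtain m where m: "n = 2*m+1" by (metis oddE)
  have "exp (\<i> * of_real (pi * of_int n)) = exp(((2 * of_int m + 1) * pi) * \<i>)"
    by (rule arg_cong[where f=exp]) (simp add: m algebra_simps)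
  also have "\<dots> = -1" by (rule exp_integer_2pi_plus1) simp
  finally show ?thesis using False by simp
qed

(* Moving the angle linearly from theta to the constant pi n keeps the antipodal sum
   equal to 2 pi n, hence is an equivariant homotopy to the sign (-1)^n. *)
lemma equivariant_circle_htp_sign:
  fixes n :: int
  assumes a_inv: "a ` A \<subseteq> A" and th_cont: "continuous_on A \<theta>"
    and h: "\<And>x. x \<in> A \<Longrightarrow> h x = exp(\<i> * of_real (\<theta> x))"
    and th_sum: "\<And>x. x \<in> A \<Longrightarrow> \<theta> (a x) + \<theta> x = 2 * pi * n"
  shows "eq_htpc A a U1 cnj h (\<lambda>k. if even n then 1 else -1)"
proof -
  define \<psi> where "\<psi> z = (1 - fst z) * \<theta> (snd z) + fst z * pi * n" for z :: "real \<times> _"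
  have \<psi>_sym: "\<psi> (t, a x) = 2 * n * pi - \<psi> (t, x)" if "x \<in> A" for t x
  proof -
    have \<theta>_ax: "\<theta> (a x) = 2 * pi * n - \<theta> x" using th_sum[OF that] by linarith
    show ?thesis unfolding \<psi>_def fst_conv snd_conv \<theta>_ax by (simp add: algebra_simps)
  qed
  have "eq_htpc A a U1 cnj h (\<lambda>k. exp(\<i> * of_real (pi * n)))"
  proof (rule eq_htpcI[OF a_inv, where H = "\<lambda>z. exp(\<i> * of_real (\<psi> z))"])
    show "continuous_on ({0..1::real} \<times> A) (\<lambda>z. exp(\<i> * of_real (\<psi> z)))"
      unfolding \<psi>_def by (intro continuous_intros continuous_on_compose_snd th_cont)
    show "\<forall>t\<in>{0..1::real}. \<forall>x\<in>A. exp(\<i> * of_real (\<psi> (t, a x))) = cnj (exp(\<i> * of_real (\<psi> (t, x))))"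
    proof (intro ballI)
      fix t :: real and x assume "x \<in> A"
      have "exp(\<i> * of_real (\<psi> (t, a x))) = exp (- (\<i> * of_real (\<psi> (t, x))) + (2 * of_int n * pi) * \<i>)"
        unfolding \<psi>_sym[OF \<open>x \<in> A\<close>] by (rule arg_cong[where f=exp]) (simp add: algebra_simps)
      also have "\<dots> = exp (- (\<i> * of_real (\<psi> (t, x))))"
        using exp_integer_2pi[of "of_int n"] by (simp only: exp_add Ints_of_int mult_1_right simp_thms)
      finally show "exp(\<i> * of_real (\<psi> (t, a x))) = cnj (exp(\<i> * of_real (\<psi> (t, x))))"
        by (simp add: exp_cnj)
    qed
  qed (use h in \<open>auto simp: \<psi>_def U1_def mult.commute\<close>)
  then show ?thesis unfolding exp_i_pi_int .
qed

lemma equivariant_circle_maps_classified: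
  fixes S :: "'a::real_normed_vector set"
  assumes "connected S" "Borsukian S" "continuous_on S a" "a ` S \<subseteq> S"
    and "h \<in> EqMaps S a U1 cnj"
  shows "eq_htpc S a U1 cnj h (\<lambda>k. 1) \<or> eq_htpc S a U1 cnj h (\<lambda>k. -1)"
proof -
  obtain \<theta> and n :: int where "continuous_on S \<theta>" "\<And>x. x \<in> S \<Longrightarrow> h x = exp(\<i> * of_real (\<theta> x))"
    "\<And>x. x \<in> S \<Longrightarrow> \<theta> (a x) + \<theta> x = 2 * pi * n"
    using equivariant_circle_lift[OF assms] by blast
  from equivariant_circle_htp_sign[OF assms(4) this] show ?thesis
    by (cases "even n") simp_all
qed

(* The parity of the antipodal sum is a homotopy invariant: lifting an equivariant
   homotopy from 1 to -1 over [0,1] x S gives one integer n that would be even at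
   time 0 and odd at time 1. *)
lemma sign_constants_not_equivariantly_homotopic:
  fixes S :: "'a::real_normed_vector set"
  assumes conn: "connected S" and ne: "S \<noteq> {}" and bors: "Borsukian ({0..1::real} \<times> S)"
    and a_cont: "continuous_on S a" and a_inv: "a ` S \<subseteq> S"
  shows "\<not> eq_htpc S a U1 cnj (\<lambda>k. 1) (\<lambda>k. -1)"
proof
  assume "eq_htpc S a U1 cnj (\<lambda>k. 1) (\<lambda>k. -1)"
  then obtain H where H: "continuous_on ({0..1::real} \<times> S) H" "H ` ({0..1::real} \<times> S) \<subseteq> U1"
    "\<forall>x\<in>S. H(0,x) = 1" "\<forall>x\<in>S. H(1,x) = -1" "\<forall>t\<in>{0..1::real}. \<forall>x\<in>S. H(t, a x) = cnj (H(t,x))"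
    by (rule eq_htpcE[OF a_inv])
  define T where "T = {0..1::real} \<times> S"
  define aT where "aT z = (fst z, a (snd z))" for z :: "real \<times> 'a"
  have "connected T" unfolding T_def by (intro connected_Times conn) auto
  moreover have "Borsukian T" using bors by (simp add: T_def)
  moreover have "continuous_on T aT"
    unfolding aT_def T_def by (intro continuous_intros continuous_on_compose_snd a_cont)
  moreover have "aT ` T \<subseteq> T" using a_inv by (auto simp: T_def aT_def)
  moreover have "H \<in> EqMaps T aT U1 cnj" using H by (auto simp: EqMaps_def T_def aT_def)
  ultimately obtain \<theta> and n :: int where th: "continuous_on T \<theta>"
    "\<And>z. z \<in> T \<Longrightarrow> H z = exp(\<i> * of_real (\<theta> z))" "\<And>z. z \<in> T \<Longrightarrow> \<theta> (aT z) + \<theta> z = 2 * pi * n"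
    by (rule equivariant_circle_lift) auto
  obtain k where k: "k \<in> S" using ne by blast
  then have ak: "a k \<in> S" using a_inv by blast
  have sign: "(if even n then 1 else -1) = c"
    if t: "t \<in> {0..1}" and c: "\<forall>x\<in>S. H (t, x) = c" for t c
  proof -
    have "continuous_on S (\<lambda>x. \<theta> (t, x))"
      by (rule continuous_on_compose2[OF th(1)]) (use t in \<open>auto intro!: continuous_intros simp: T_def\<close>)
    moreover have "\<And>x. x \<in> S \<Longrightarrow> exp(\<i> * of_real (\<theta> (t, x))) = c"
      using th(2) c t by (auto simp: T_def)
    ultimately have "\<theta> (t, a k) = \<theta> (t, k)"
      using circle_lift_of_constant[OF conn _ _ ak k] by blast
    then have \<theta>_tk: "\<theta> (t, k) = pi * n" using th(3)[of "(t,k)"] t k by (simp add: T_def aT_def)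
    have "exp(\<i> * of_real (\<theta> (t, k))) = (if even n then 1 else -1)"
      unfolding \<theta>_tk by (rule exp_i_pi_int)
    moreover have "exp(\<i> * of_real (\<theta> (t, k))) = c" using th(2)[of "(t,k)"] c t k by (auto simp: T_def)
    ultimately show ?thesis by simp
  qed
  have "(if even n then 1 else -1) = (1::complex)" using sign[of 0] H(3) by simp
  moreover have "(if even n then 1 else -1) = (-1::complex)" using sign[of 1] H(4) by simp
  ultimately show False by (simp split: if_splits)
qed

lemma antip_image_S2: "antip ` S2 \<subseteq> S2"
  by (auto simp: S2_def antip_def)

lemma continuous_on_antip: "continuous_on A antip"
  unfolding antip_def by (intro continuous_intros)

lemma S2_nonempty: "S2 \<noteq> {}"
  by (simp add: S2_def)

lemma connected_S2: "connected S2"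
  by (simp add: S2_def connected_sphere)

lemma Borsukian_S2: "Borsukian S2"
  unfolding S2_def by (rule Borsukian_sphere) simp

lemma Borsukian_interval_times_S2: "Borsukian ({0..1::real} \<times> S2)"
proof (rule simply_connected_imp_Borsukian)
  show "simply_connected ({0..1::real} \<times> S2)" unfolding S2_def
    by (intro simply_connected_Times convex_imp_simply_connected simply_connected_sphere) auto
  show "locally path_connected ({0..1::real} \<times> S2)" unfolding S2_def
    by (rule locally_Times[where R=path_connected, OF convex_imp_locally_path_connected
          ENR_imp_locally_path_connected[OF ENR_sphere]])
       (auto intro: path_connected_Times)
qed

lemma S2_coordinates: "k \<in> S2 \<Longrightarrow> (k$1)^2 + (k$2)^2 + (k$3)^2 = 1"
proof -
  assume "k \<in> S2"
  then have "k \<bullet> k = 1" by (simp add: S2_def norm_eq_1 flip: power2_norm_eq_inner)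
  then show ?thesis by (simp add: inner_vec_def sum_3 power2_eq_square)
qed

lemma S2_circle_maps_classified:
  "h \<in> EqMaps S2 antip U1 cnj \<Longrightarrow> eq_htpc S2 antip U1 cnj h (\<lambda>k. 1) \<or> eq_htpc S2 antip U1 cnj h (\<lambda>k. -1)"
  by (rule equivariant_circle_maps_classified[OF connected_S2 Borsukian_S2 continuous_on_antip antip_image_S2])

lemma S2_sign_constants_not_homotopic: "\<not> eq_htpc S2 antip U1 cnj (\<lambda>k. 1) (\<lambda>k. -1)"
  by (rule sign_constants_not_equivariantly_homotopic[OF connected_S2 S2_nonempty
        Borsukian_interval_times_S2 continuous_on_antip antip_image_S2])

lemma sign_constants_equivariant: "(\<lambda>k. 1) \<in> EqMaps S2 antip U1 cnj" "(\<lambda>k. -1) \<in> EqMaps S2 antip U1 cnj"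
  unfolding EqMaps_def U1_def by auto

definition mat2 :: "complex \<Rightarrow> complex \<Rightarrow> complex \<Rightarrow> complex \<Rightarrow> complex^2^2" where
  "mat2 a b c d = (\<chi> i j. if i = 1 then (if j = 1 then a else b) else (if j = 1 then c else d))"

lemma mat2_nth [simp]:
  "mat2 a b c d $1$1 = a" "mat2 a b c d $1$2 = b" "mat2 a b c d $2$1 = c" "mat2 a b c d $2$2 = d"
  by (simp_all add: mat2_def)

lemma matrix2_eq_iff: "(A::'a^2^2) = B \<longleftrightarrow> A$1$1=B$1$1 \<and> A$1$2=B$1$2 \<and> A$2$1=B$2$1 \<and> A$2$2=B$2$2"
  by (auto simp add: vec_eq_iff forall_2)

lemma mat2_eq_iff: "mat2 a b c d = mat2 a' b' c' d' \<longleftrightarrow> a = a' \<and> b = b' \<and> c = c' \<and> d = d'"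
  by (simp add: matrix2_eq_iff)

lemma mat2_cases: obtains a b c d where "A = mat2 a b c d"
proof
  show "A = mat2 (A$1$1) (A$1$2) (A$2$1) (A$2$2)" by (simp add: matrix2_eq_iff)
qed

lemma matrix_mult_nth2: "((A::'a::semiring_1^2^2) ** B)$i$j = A$i$1*B$1$j + A$i$2*B$2$j"
  by (simp add: matrix_matrix_mult_def sum_2)

lemma mult_mat2: "mat2 a b c d ** mat2 a' b' c' d' = mat2 (a*a'+b*c') (a*b'+b*d') (c*a'+d*c') (c*b'+d*d')"
  by (simp add: matrix2_eq_iff matrix_mult_nth2)

lemma adj_mat2: "adj (mat2 a b c d) = mat2 (cnj a) (cnj c) (cnj b) (cnj d)"
  by (simp add: matrix2_eq_iff adj_def mconj_def transpose_def)

lemma one_mat2: "mat 1 = mat2 1 0 0 1"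
  by (simp add: matrix2_eq_iff mat_def)

lemma mu_mat2: "mu (mat2 a b c d) = mat2 (cnj d) (- cnj c) (- cnj b) (cnj a)"
proof -
  have Q: "Qm = mat2 0 (-1) 1 0" by (simp add: matrix2_eq_iff Qm_def)
  have C: "mconj (mat2 a b c d) = mat2 (cnj a) (cnj b) (cnj c) (cnj d)"
    by (simp add: matrix2_eq_iff mconj_def)
  show ?thesis unfolding mu_def Q C by (simp add: mult_mat2 matrix2_eq_iff)
qed

lemma det_mat2: "det (mat2 a b c d) = a*d - b*c"
  by (simp add: det_2)

lemma U2_mat2: "mat2 a b c d \<in> U2 \<longleftrightarrow>
    a*cnj a + b*cnj b = 1 \<and> a*cnj c + b*cnj d = 0 \<and> c*cnj a + d*cnj b = 0 \<and> c*cnj c + d * cnj d = 1 \<and>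
    cnj a * a + cnj c * c = 1 \<and> cnj a * b + cnj c * d = 0 \<and> cnj b * a + cnj d * c = 0 \<and> cnj b * b + cnj d * d = 1"
  by (simp add: U2_def adj_mat2 mult_mat2 one_mat2 matrix2_eq_iff conj_ac)

lemma continuous_on_matrix:
  assumes "\<And>i j. continuous_on S (\<lambda>x. f x $ i $ j)"
  shows "continuous_on S (f :: _ \<Rightarrow> 'a::real_normed_vector^'n^'m)"
proof -
  have "continuous_on S (\<lambda>x. \<chi> i. \<chi> j. f x $ i $ j)"
    by (intro continuous_on_vec_lambda assms)
  then show ?thesis by simp
qed

lemma continuous_on_mat2 [continuous_intros]:
  assumes "continuous_on S a" "continuous_on S b" "continuous_on S c" "continuous_on S d"
  shows "continuous_on S (\<lambda>x. mat2 (a x) (b x) (c x) (d x))"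
proof (rule continuous_on_matrix)
  fix i j :: 2
  show "continuous_on S (\<lambda>x. mat2 (a x) (b x) (c x) (d x) $ i $ j)"
    using assms exhaust_2[of i] exhaust_2[of j] by auto
qed

lemma continuous_on_det2 [continuous_intros]:
  "continuous_on S (f :: _ \<Rightarrow> complex^2^2) \<Longrightarrow> continuous_on S (\<lambda>x. det (f x))"
  unfolding det_2 by (intro continuous_intros)

lemma continuous_on_matrix_mult2 [continuous_intros]:
  "continuous_on S (f :: _ \<Rightarrow> complex^2^2) \<Longrightarrow> continuous_on S g \<Longrightarrow> continuous_on S (\<lambda>x. f x ** g x)"
  by (rule continuous_on_matrix) (simp add: matrix_mult_nth2, intro continuous_intros)

lemma continuous_on_adj [continuous_intros]:
  "continuous_on S (f :: _ \<Rightarrow> complex^2^2) \<Longrightarrow> continuous_on S (\<lambda>x. adj (f x))"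
  by (rule continuous_on_matrix) (simp add: adj_def mconj_def transpose_def, intro continuous_intros)

lemma mu_mult: "mu (A ** B) = mu A ** mu B"
  by (cases A rule: mat2_cases; cases B rule: mat2_cases) (simp add: mult_mat2 mu_mat2 mat2_eq_iff algebra_simps)

lemma mu_adj: "mu (adj A) = adj (mu A)"
  by (cases A rule: mat2_cases) (simp add: adj_mat2 mu_mat2)

lemma det_mu: "det (mu A) = cnj (det A)"
  by (cases A rule: mat2_cases) (simp add: mu_mat2 det_mat2)

lemma det_adj: "det (adj A) = cnj (det A)"
  by (cases A rule: mat2_cases) (simp add: adj_mat2 det_mat2)

lemma adj_mult: "adj (A ** B) = adj B ** adj A"
  by (cases A rule: mat2_cases; cases B rule: mat2_cases) (simp add: mult_mat2 adj_mat2 mat2_eq_iff algebra_simps)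

lemma adj_adj [simp]: "adj (adj A) = A"
  by (cases A rule: mat2_cases) (simp add: adj_mat2)

lemma U2_mult: "A \<in> U2 \<Longrightarrow> B \<in> U2 \<Longrightarrow> A ** B \<in> U2"
  unfolding U2_def by (simp add: adj_mult matrix_mul_assoc) (metis matrix_mul_assoc matrix_mul_rid)

lemma U2_adj: "A \<in> U2 \<Longrightarrow> adj A \<in> U2"
  unfolding U2_def by simp

lemma U2_adj_mult: "A \<in> U2 \<Longrightarrow> adj A ** A = mat 1"
  unfolding U2_def by simp

lemma det_one: "det (mat 1 :: complex^2^2) = 1"
  by (simp add: one_mat2 det_mat2)

lemma det_U2: assumes "A \<in> U2" shows "det A \<in> U1"
proof -
  have "A ** adj A = mat 1" using assms by (simp add: U2_def)
  then have "det A * cnj (det A) = 1"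
    using arg_cong[where f=det] by (metis det_mul det_adj det_one)
  then have "complex_of_real ((cmod (det A))\<^sup>2) = 1" using complex_norm_square[of "det A"] by simp
  then have "(cmod (det A))\<^sup>2 = 1" by (metis of_real_eq_1_iff)
  then show ?thesis using norm_ge_zero[of "det A"] by (auto simp add: U1_def power2_eq_1_iff)
qed

lemma one_U2: "mat 1 \<in> U2"
  by (simp add: U2_def one_mat2 adj_mat2 mult_mat2)

(* SU(2) is the 3-sphere: every matrix of SU(2) has the form su2 (a,b) with |a|^2+|b|^2 = 1,
   and mu fixes SU(2) pointwise. *)
definition su2 :: "complex \<times> complex \<Rightarrow> complex^2^2" where
  "su2 p = mat2 (fst p) (snd p) (- cnj (snd p)) (cnj (fst p))"

lemma SU2_eq_su2:
  assumes "A \<in> U2" "det A = 1"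
  shows "A = su2 (A$1$1, A$1$2)"
proof -
  obtain a b c d where A: "A = mat2 a b c d" by (rule mat2_cases)
  have e: "a*cnj a + b*cnj b = 1" "cnj a * c + cnj b * d = 0" "a*d - b*c = 1"
    using assms unfolding A U2_mat2 det_mat2 by (auto simp: complex_cnj_cancel_iff)
      (metis complex_cnj_add complex_cnj_cnj complex_cnj_mult complex_cnj_zero mult.commute)
  have "c = c * (a*cnj a + b*cnj b)" using e by simp
  also have "\<dots> = - cnj b * (a*d - b*c) + a * (cnj a * c + cnj b * d)" by (simp add: algebra_simps)
  also have "\<dots> = - cnj b" using e by simp
  finally have c: "c = - cnj b" .
  have "d = d * (a*cnj a + b*cnj b)" using e by simp
  also have "\<dots> = cnj a * (a*d - b*c) + b * (cnj a * c + cnj b * d)" by (simp add: algebra_simps)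
  also have "\<dots> = cnj a" using e by simp
  finally have d: "d = cnj a" .
  show ?thesis using A c d by (simp add: su2_def)
qed

lemma su2_U2: "norm p = 1 \<Longrightarrow> su2 p \<in> U2"
proof -
  assume n: "norm p = 1"
  obtain a b where p: "p = (a,b)" by fastforce
  have "(cmod a)\<^sup>2 + (cmod b)\<^sup>2 = 1" using n by (simp add: p norm_Pair)
  then have "a * cnj a + b * cnj b = 1"
    by (metis complex_norm_square of_real_1 of_real_add)
  then show ?thesis unfolding su2_def p U2_mat2 by (simp add: algebra_simps)
qed

lemma U2_first_row_norm: "A \<in> U2 \<Longrightarrow> norm (A$1$1, A$1$2) = 1"
proof -
  assume "A \<in> U2"
  obtain a b c d where A: "A = mat2 a b c d" by (rule mat2_cases)
  have "a * cnj a + b * cnj b = 1" using \<open>A \<in> U2\<close> unfolding A U2_mat2 by blast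
  then have "complex_of_real ((cmod a)\<^sup>2 + (cmod b)\<^sup>2) = 1"
    using complex_norm_square[of a] complex_norm_square[of b] by simp
  then have "(cmod a)\<^sup>2 + (cmod b)\<^sup>2 = 1" by (metis of_real_eq_1_iff)
  then show ?thesis by (simp add: A norm_Pair)
qed

lemma continuous_on_su2 [continuous_intros]: "continuous_on S f \<Longrightarrow> continuous_on S (\<lambda>x. su2 (f x))"
  unfolding su2_def by (intro continuous_intros)

lemma mu_su2: "mu (su2 p) = su2 p"
  by (simp add: su2_def mu_mat2)

lemma mu_SU2: "A \<in> U2 \<Longrightarrow> det A = 1 \<Longrightarrow> mu A = A"
  by (metis SU2_eq_su2 mu_su2)

definition smult2 :: "complex \<Rightarrow> complex^2^2 \<Rightarrow> complex^2^2" where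
  "smult2 c A = mat2 c 0 0 c ** A"

lemma mu_smult2: "mu (smult2 c A) = smult2 (cnj c) (mu A)"
  by (simp add: smult2_def mu_mult mu_mat2)

lemma det_smult2: "det (smult2 c A) = c^2 * det A"
  by (simp add: smult2_def det_mul det_mat2 power2_eq_square)

lemma smult2_one: "smult2 1 A = A"
  by (simp add: smult2_def one_mat2[symmetric])

lemma smult2_U2: "cmod c = 1 \<Longrightarrow> A \<in> U2 \<Longrightarrow> smult2 c A \<in> U2"
  unfolding smult2_def
proof (rule U2_mult)
  assume "cmod c = 1"
  then have "c * cnj c = 1" by (metis complex_norm_square mult.right_neutral of_real_1 power_one)
  then show "mat2 c 0 0 c \<in> U2" unfolding U2_mat2 by (simp add: mult.commute)
qed

lemma continuous_on_smult2 [continuous_intros]: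
  "continuous_on S c \<Longrightarrow> continuous_on S f \<Longrightarrow> continuous_on S (\<lambda>x. smult2 (c x) (f x))"
  unfolding smult2_def by (intro continuous_intros)

(* A differentiable image of S^2 in the 3-sphere of C^2 misses a point: extending the map
   radially to R^3 - {0} gives a differentiable map into a space of dimension 4, whose
   image is negligible and so cannot contain all of C^2 - {0}. *)
lemma differentiable_image_of_S2_misses_point:
  fixes n :: "real^3 \<Rightarrow> complex \<times> complex"
  assumes diff: "n differentiable_on S2"
  shows "\<exists>c. c \<in> sphere 0 1 \<and> c \<notin> n ` S2"
proof (rule ccontr)
  assume "\<not> (\<exists>c. c \<in> sphere 0 1 \<and> c \<notin> n ` S2)"
  then have cover: "sphere 0 1 \<subseteq> n ` S2" by blast
  have sub: "(\<lambda>x. x /\<^sub>R norm x) ` (UNIV - {0}) \<subseteq> S2"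
    unfolding S2_def image_subset_iff by (simp add: norm_divide)
  have diff': "n differentiable_on (\<lambda>x. x /\<^sub>R norm x) ` (UNIV - {0::real^3})"
    by (rule differentiable_on_subset[OF diff sub])
  define g where "g x = norm x *\<^sub>R n (inverse (norm x) *\<^sub>R x)" for x :: "real^3"
  have "g differentiable_on UNIV - {0}"
    unfolding g_def
    by (rule diff' derivative_intros differentiable_on_compose [where f=n] | force)+
  then have neg: "negligible (g ` (UNIV - {0}))"
    by (rule negligible_differentiable_image_lowdim[rotated]) simp
  have "UNIV - {0} \<subseteq> g ` (UNIV - {0})"
  proof
    fix y :: "complex \<times> complex" assume "y \<in> UNIV - {0}"
    then have y0: "y \<noteq> 0" by simp
    then have "y /\<^sub>R norm y \<in> sphere 0 1" by (simp add: norm_divide)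
    then obtain u where u: "u \<in> S2" "y /\<^sub>R norm y = n u" using cover by blast
    define x where "x = norm y *\<^sub>R u"
    have nx: "norm x = norm y" using u(1) by (simp add: x_def S2_def)
    have "inverse (norm x) *\<^sub>R x = u" using nx y0 by (simp add: x_def)
    then have "g x = y" using u(2)[symmetric] nx y0 by (simp add: g_def)
    moreover have "x \<noteq> 0" using nx y0 by auto
    ultimately show "y \<in> g ` (UNIV - {0})" by blast
  qed
  then have "negligible (UNIV - {0::complex \<times> complex})" using neg negligible_subset by blast
  then have "negligible (insert 0 (UNIV - {0::complex \<times> complex}))" by (simp only: negligible_insert)
  moreover have "insert 0 (UNIV - {0}) = (UNIV :: (complex \<times> complex) set)" by auto
  ultimately show False by simp
qed

lemma constant_maps_eq_htpc:
  assumes inv: "a ` A \<subseteq> A" and "path_connected B" "c \<in> B" "d \<in> B"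
  shows "eq_htpc A a B id (\<lambda>x. c) (\<lambda>x. d)"
proof -
  obtain \<gamma> where \<gamma>: "path \<gamma>" "path_image \<gamma> \<subseteq> B" "pathstart \<gamma> = c" "pathfinish \<gamma> = d"
    using assms(2-4) unfolding path_connected_def by blast
  show ?thesis
  proof (rule eq_htpcI[OF inv, where H = "\<lambda>z. \<gamma> (fst z)"])
    show "continuous_on ({0..1::real} \<times> A) (\<lambda>z. \<gamma> (fst z))"
      using \<gamma>(1) unfolding path_def by (rule continuous_on_compose_fst)
    show "(\<lambda>z. \<gamma> (fst z)) ` ({0..1::real} \<times> A) \<subseteq> B"
      using \<gamma>(2) by (auto simp: path_image_def)
  qed (use \<gamma>(3,4) in \<open>auto simp: pathstart_def pathfinish_def\<close>)
qed

lemma segment_eq_htpc_sphere: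
  fixes u w :: "'a::topological_space \<Rightarrow> 'b::real_normed_vector"
  assumes inv: "a ` A \<subseteq> A" and uc: "continuous_on A u" and wc: "continuous_on A w"
    and ue: "\<And>x. x \<in> A \<Longrightarrow> u (a x) = u x" and we: "\<And>x. x \<in> A \<Longrightarrow> w (a x) = w x"
    and un: "\<And>x. x \<in> A \<Longrightarrow> norm (u x) = 1" and wn: "\<And>x. x \<in> A \<Longrightarrow> norm (w x) = 1"
    and nz: "\<And>x t. x \<in> A \<Longrightarrow> 0 \<le> t \<Longrightarrow> t \<le> 1 \<Longrightarrow> (1 - t) *\<^sub>R u x + t *\<^sub>R w x \<noteq> 0"
  shows "eq_htpc A a (sphere 0 1) id u w"
proof -
  define v where "v z = (1 - fst z) *\<^sub>R u (snd z) + fst z *\<^sub>R w (snd z)" for z :: "real \<times> 'a"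
  have vnz: "v z \<noteq> 0" if "z \<in> {0..1} \<times> A" for z
    using that nz by (auto simp: v_def)
  have vc: "continuous_on ({0..1::real} \<times> A) v"
    unfolding v_def by (intro continuous_intros continuous_on_compose_snd uc wc)
  show ?thesis
  proof (rule eq_htpcI[OF inv, where H = "\<lambda>z. inverse (norm (v z)) *\<^sub>R v z"])
    show "continuous_on ({0..1::real} \<times> A) (\<lambda>z. inverse (norm (v z)) *\<^sub>R v z)"
      using vnz by (intro continuous_intros vc) auto
    show "(\<lambda>z. inverse (norm (v z)) *\<^sub>R v z) ` ({0..1::real} \<times> A) \<subseteq> sphere 0 1"
      using vnz by (auto simp: image_subset_iff)
  qed (use un wn ue we in \<open>auto simp: v_def\<close>)
qed

(* Uniform approximation of an even continuous map on S^2 by an even polynomial map,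
   obtained by symmetrizing a Stone-Weierstrass approximation. *)
lemma even_polynomial_approximation:
  fixes p :: "real^3 \<Rightarrow> 'b::euclidean_space"
  assumes pc: "continuous_on S2 p" and pe: "\<And>x. x \<in> S2 \<Longrightarrow> p (antip x) = p x" and e: "e > 0"
  obtains q where "polynomial_function q" "\<And>x. q (antip x) = q x" "\<And>x. x \<in> S2 \<Longrightarrow> norm (p x - q x) < e"
proof -
  obtain r where r: "polynomial_function r" "\<And>x. x \<in> S2 \<Longrightarrow> norm (p x - r x) < e"
    using Stone_Weierstrass_polynomial_function[OF _ pc e] by (auto simp: S2_def)
  define q where "q x = (1/2) *\<^sub>R (r x + r (antip x))" for x
  have "polynomial_function (r \<circ> (\<lambda>x. - x))"
    by (rule polynomial_function_compose[OF polynomial_function_minus[OF polynomial_function_id] r(1)])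
  then have "polynomial_function q"
    unfolding q_def antip_def o_def using r(1) by (intro polynomial_function_cmul polynomial_function_add)
  moreover have "q (antip x) = q x" for x by (simp add: q_def antip_def add.commute)
  moreover have "norm (p x - q x) < e" if x: "x \<in> S2" for x
  proof -
    have "p x - q x = (1/2) *\<^sub>R ((p x - r x) + (p (antip x) - r (antip x)))"
      using pe[OF x] by (simp add: q_def algebra_simps flip: scaleR_2)
    then have "norm (p x - q x) \<le> (1/2) * (norm (p x - r x) + norm (p (antip x) - r (antip x)))"
      by (simp add: norm_triangle_ineq)
    also have "\<dots> < e"
      using r(2)[OF x] r(2)[of "antip x"] antip_image_S2 x by auto
    finally show ?thesis .
  qed
  ultimately show ?thesis using that by blast
qed

lemma even_differentiable_sphere_approximation:
  fixes p :: "real^3 \<Rightarrow> 'b::euclidean_space"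
  assumes pc: "continuous_on S2 p" and pe: "\<And>x. x \<in> S2 \<Longrightarrow> p (antip x) = p x"
    and pn: "\<And>x. x \<in> S2 \<Longrightarrow> norm (p x) = 1"
  obtains v where "v differentiable_on S2" "\<And>x. v (antip x) = v x"
    "\<And>x. x \<in> S2 \<Longrightarrow> norm (v x) = 1" "\<And>x. x \<in> S2 \<Longrightarrow> norm (p x - v x) < 1"
proof -
  obtain q where q: "polynomial_function q" "\<And>x. q (antip x) = q x" "\<And>x. x \<in> S2 \<Longrightarrow> norm (p x - q x) < 1/2"
    using even_polynomial_approximation[OF pc pe, of "1/2"] by auto
  have qn: "norm (q x) > 1/2" if x: "x \<in> S2" for x
    using q(3)[OF x] pn[OF x] norm_triangle_ineq3[of "p x" "q x"] by linarith
  have q0: "norm (q x) \<noteq> 0" if "x \<in> S2" for x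
    using qn[OF that] by auto
  define v where "v x = inverse (norm (q x)) *\<^sub>R q x" for x
  have "v differentiable_on S2"
  proof (rule differentiable_at_imp_differentiable_on)
    fix x assume x: "x \<in> S2"
    have qd: "q differentiable (at x)" by (rule differentiable_at_polynomial_function[OF q(1)])
    have "q x \<noteq> 0" using qn[OF x] by auto
    then have "(\<lambda>y. norm (q y)) differentiable (at x)"
      by (intro differentiable_compose[where f=norm and g=q, OF differentiable_norm_at qd])
    then have "(\<lambda>y. inverse (norm (q y))) differentiable (at x)"
      by (rule differentiable_inverse) (use \<open>q x \<noteq> 0\<close> in simp)
    then show "v differentiable (at x)"
      unfolding v_def using qd by (rule differentiable_scaleR)
  qed
  moreover have "v (antip x) = v x" for x by (simp add: v_def q(2))
  moreover have vn: "norm (v x) = 1" if "x \<in> S2" for x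
    using q0[OF that] by (simp add: v_def)
  moreover have "norm (p x - v x) < 1" if x: "x \<in> S2" for x
  proof -
    have "q x - v x = (norm (q x) - 1) *\<^sub>R v x"
      using q0[OF x] by (simp add: v_def algebra_simps)
    then have "norm (q x - v x) = \<bar>norm (q x) - norm (p x)\<bar>"
      using vn[OF x] pn[OF x] by simp
    also have "\<dots> \<le> norm (p x - q x)" by (metis norm_minus_commute norm_triangle_ineq3)
    finally have "norm (q x - v x) < 1/2" using q(3)[OF x] by simp
    then show ?thesis using q(3)[OF x] norm_triangle_ineq[of "p x - q x" "q x - v x"] by simp
  qed
  ultimately show ?thesis using that by blast
qed

(* Every even map S^2 -> S^3 is null-homotopic through even maps: move it to a nearby
   even differentiable map v, then along segments to the antipode of a point c missed by v,
   and finally along a path in S^3 to the base point. *)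
lemma even_sphere_map_nullhomotopic:
  fixes p :: "real^3 \<Rightarrow> complex \<times> complex"
  assumes pc: "continuous_on S2 p" and pe: "\<And>x. x \<in> S2 \<Longrightarrow> p (antip x) = p x"
    and pn: "\<And>x. x \<in> S2 \<Longrightarrow> norm (p x) = 1"
  shows "eq_htpc S2 antip (sphere 0 1) id p (\<lambda>x. (1,0))"
proof -
  obtain v where v: "v differentiable_on S2" "\<And>x. v (antip x) = v x"
    "\<And>x. x \<in> S2 \<Longrightarrow> norm (v x) = 1" "\<And>x. x \<in> S2 \<Longrightarrow> norm (p x - v x) < 1"
    using even_differentiable_sphere_approximation[OF pc pe pn] by blast
  have vc: "continuous_on S2 v" by (rule differentiable_imp_continuous_on[OF v(1)])
  obtain c where c: "norm c = 1" "c \<notin> v ` S2"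
    using differentiable_image_of_S2_misses_point[OF v(1)] by auto
  have p_v: "eq_htpc S2 antip (sphere 0 1) id p v"
  proof (rule segment_eq_htpc_sphere[OF antip_image_S2 pc vc pe v(2) pn v(3)])
    fix x and t :: real assume x: "x \<in> S2" and t: "0 \<le> t" "t \<le> 1"
    have "norm (t *\<^sub>R (v x - p x)) < 1"
      using v(4)[OF x] t by (simp add: norm_minus_commute) (smt (verit) mult_left_le_one_le norm_ge_zero)
    then have "norm (p x + t *\<^sub>R (v x - p x)) > 0"
      using pn[OF x] norm_diff_ineq[of "p x" "t *\<^sub>R (v x - p x)"] by linarith
    then show "(1 - t) *\<^sub>R p x + t *\<^sub>R v x \<noteq> 0" by (auto simp: algebra_simps)
  qed
  have v_c: "eq_htpc S2 antip (sphere 0 1) id v (\<lambda>x. - c)"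
  proof (rule segment_eq_htpc_sphere[OF antip_image_S2 vc _ v(2) _ v(3)])
    fix x and t :: real assume x: "x \<in> S2" and t: "0 \<le> t" "t \<le> 1"
    show "(1 - t) *\<^sub>R v x + t *\<^sub>R - c \<noteq> 0"
    proof
      assume "(1 - t) *\<^sub>R v x + t *\<^sub>R - c = 0"
      then have eq: "(1 - t) *\<^sub>R v x = t *\<^sub>R c" by (simp add: algebra_simps)
      then have "norm ((1 - t) *\<^sub>R v x) = norm (t *\<^sub>R c)" by simp
      then have t_half: "t = 1/2" using t v(3)[OF x] c(1) by simp
      have "v x = c" using eq unfolding t_half by simp
      then show False using c(2) x by blast
    qed
  qed (use c in auto)
  have c_base: "eq_htpc S2 antip (sphere 0 1) id (\<lambda>x. - c) (\<lambda>x. (1,0))"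
    by (rule constant_maps_eq_htpc[OF antip_image_S2 path_connected_sphere]) (use c in auto)
  show ?thesis by (rule eq_htpc_trans[OF eq_htpc_trans[OF p_v v_c] c_base])
qed

(* An even SU(2)-valued map on S^2 is equivariantly null-homotopic in (U(2), mu): it is
   su2 of an even map into S^3, and su2 intertwines the identity with mu. *)
lemma even_SU2_map_nullhomotopic:
  assumes Gc: "continuous_on S2 G" and GU: "\<And>k. k \<in> S2 \<Longrightarrow> G k \<in> U2"
    and Gdet: "\<And>k. k \<in> S2 \<Longrightarrow> det (G k) = 1" and Ge: "\<And>k. k \<in> S2 \<Longrightarrow> G (antip k) = G k"
  shows "eq_htpc S2 antip U2 mu G (\<lambda>k. mat 1)"
proof -
  define p where "p k = (G k $1$1, G k $1$2)" for k
  have "eq_htpc S2 antip (sphere 0 1) id p (\<lambda>k. (1,0))"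
  proof (rule even_sphere_map_nullhomotopic)
    show "continuous_on S2 p" unfolding p_def by (intro continuous_intros Gc)
  qed (use Ge GU U2_first_row_norm in \<open>auto simp: p_def\<close>)
  then have "eq_htpc S2 antip U2 mu (\<lambda>k. su2 (p k)) (\<lambda>k. su2 (1,0))"
    by (rule eq_htpc_pointwise[OF antip_image_S2])
       (auto intro!: continuous_intros su2_U2 simp: mu_su2)
  then show ?thesis
    by (rule eq_htpc_cong[OF antip_image_S2])
       (use SU2_eq_su2 GU Gdet in \<open>auto simp: p_def su2_def one_mat2\<close>)
qed

(* If det F = exp(i phi) with phi odd, the scalar rotation exp(-i t phi/2) F, t in [0,1],
   is an equivariant homotopy from F to an even map into SU(2), which is then contracted. *)
lemma odd_det_angle_nullhomotopic:
  assumes F: "F \<in> EqMaps S2 antip U2 mu" and \<phi>c: "continuous_on S2 \<phi>"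
    and detF: "\<And>k. k \<in> S2 \<Longrightarrow> det (F k) = exp (\<i> * of_real (\<phi> k))"
    and \<phi>_odd: "\<And>k. k \<in> S2 \<Longrightarrow> \<phi> (antip k) = - \<phi> k"
  shows "eq_htpc S2 antip U2 mu F (\<lambda>k. mat 1)"
proof -
  have Fc: "continuous_on S2 F" and FU: "\<And>k. k \<in> S2 \<Longrightarrow> F k \<in> U2"
    and Fe: "\<And>k. k \<in> S2 \<Longrightarrow> F (antip k) = mu (F k)"
    using F by (auto simp: EqMaps_def)
  define rot where "rot t k = smult2 (exp (\<i> * of_real (- (t * \<phi> k) / 2))) (F k)" for t k
  have rot_U2: "rot t k \<in> U2" if "k \<in> S2" for t k
    unfolding rot_def by (rule smult2_U2[OF _ FU[OF that]]) simp
  have rot_equiv: "rot t (antip k) = mu (rot t k)" if "k \<in> S2" for t k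
  proof -
    have "cnj (exp (\<i> * of_real (- (t * \<phi> k) / 2))) = exp (\<i> * of_real (- (t * \<phi> (antip k)) / 2))"
      using \<phi>_odd[OF that] by (simp add: exp_cnj)
    then show ?thesis unfolding rot_def using Fe[OF that] by (simp add: mu_smult2)
  qed
  have rot_det: "det (rot 1 k) = 1" if "k \<in> S2" for k
  proof -
    have "det (rot 1 k) = exp (\<i> * of_real (- \<phi> k / 2)) ^ 2 * exp (\<i> * of_real (\<phi> k))"
      unfolding rot_def det_smult2 detF[OF that] by simp
    also have "\<dots> = exp (2 * (\<i> * of_real (- \<phi> k / 2)) + \<i> * of_real (\<phi> k))"
      by (simp only: exp_add exp_double)
    also have "\<dots> = 1" by simp
    finally show ?thesis .
  qed
  have F_rot: "eq_htpc S2 antip U2 mu F (rot 1)"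
  proof (rule eq_htpcI[OF antip_image_S2, where H = "\<lambda>z. rot (fst z) (snd z)"])
    show "continuous_on ({0..1::real} \<times> S2) (\<lambda>z. rot (fst z) (snd z))" unfolding rot_def
      by (intro continuous_intros continuous_on_compose_snd \<phi>c Fc) auto
  qed (use rot_U2 rot_equiv in \<open>auto simp: rot_def smult2_one\<close>)
  have "eq_htpc S2 antip U2 mu (rot 1) (\<lambda>k. mat 1)"
  proof (rule even_SU2_map_nullhomotopic)
    show "continuous_on S2 (rot 1)" unfolding rot_def by (intro continuous_intros \<phi>c Fc) auto
    show "rot 1 (antip k) = rot 1 k" if "k \<in> S2" for k
      using rot_equiv[OF that] mu_SU2[OF rot_U2[OF that] rot_det[OF that]] by simp
  qed (use rot_U2 rot_det in auto)
  then show ?thesis by (rule eq_htpc_trans[OF F_rot])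
qed

lemma det_equivariant: "f \<in> EqMaps S2 antip U2 mu \<Longrightarrow> (\<lambda>k. det (f k)) \<in> EqMaps S2 antip U1 cnj"
  unfolding EqMaps_def using det_U2 det_mu by (auto intro!: continuous_intros)

lemma det_preserves_eq_htpc:
  "eq_htpc S2 antip U2 mu f g \<Longrightarrow> eq_htpc S2 antip U1 cnj (\<lambda>k. det (f k)) (\<lambda>k. det (g k))"
  by (rule eq_htpc_pointwise[OF antip_image_S2]) (auto intro!: continuous_intros det_U2 simp: det_mu)

lemma equivariant_product:
  assumes "f \<in> EqMaps S2 antip U2 mu" "g \<in> EqMaps S2 antip U2 mu"
  shows "(\<lambda>k. f k ** g k) \<in> EqMaps S2 antip U2 mu"
  using assms unfolding EqMaps_def by (auto intro!: continuous_intros U2_mult simp: mu_mult)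

(* A map whose determinant is homotopic to 1 is homotopic to 1: the angle of det F has
   even antipodal sum 2 pi n (odd n would make 1 homotopic to -1), so phi = theta - pi n
   is an odd angle of det F. *)
lemma trivial_det_imp_nullhomotopic:
  assumes F: "F \<in> EqMaps S2 antip U2 mu" and hd: "eq_htpc S2 antip U1 cnj (\<lambda>k. det (F k)) (\<lambda>k. 1)"
  shows "eq_htpc S2 antip U2 mu F (\<lambda>k. mat 1)"
proof -
  obtain \<theta> and n :: int where th: "continuous_on S2 \<theta>"
    "\<And>x. x \<in> S2 \<Longrightarrow> det (F x) = exp(\<i> * of_real (\<theta> x))" "\<And>x. x \<in> S2 \<Longrightarrow> \<theta> (antip x) + \<theta> x = 2 * pi * n"
    using equivariant_circle_lift[OF connected_S2 Borsukian_S2 continuous_on_antip antip_image_S2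
        det_equivariant[OF F]] by blast
  have "even n"
  proof (rule ccontr)
    assume "odd n"
    then have "eq_htpc S2 antip U1 cnj (\<lambda>k. det (F k)) (\<lambda>k. -1)"
      using equivariant_circle_htp_sign[OF antip_image_S2 th] by simp
    then show False
      using S2_sign_constants_not_homotopic eq_htpc_trans[OF eq_htpc_sym[OF hd]] by blast
  qed
  show ?thesis
  proof (rule odd_det_angle_nullhomotopic[OF F, where \<phi> = "\<lambda>k. \<theta> k - pi * n"])
    show "continuous_on S2 (\<lambda>k. \<theta> k - pi * n)" by (intro continuous_intros th(1))
    show "\<theta> (antip k) - pi * n = - (\<theta> k - pi * n)" if "k \<in> S2" for k
      using th(3)[OF that] by (simp add: algebra_simps)
    show "det (F k) = exp (\<i> * of_real (\<theta> k - pi * n))" if "k \<in> S2" for k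
    proof -
      have e: "exp (\<i> * of_real (pi * of_int n)) = 1"
        unfolding exp_i_pi_int using \<open>even n\<close> by simp
      have "exp (\<i> * of_real (\<theta> k - pi * n)) = exp (\<i> * of_real (\<theta> k)) / exp (\<i> * of_real (pi * n))"
        unfolding of_real_diff right_diff_distrib exp_diff ..
      then show ?thesis using th(2)[OF that] e by simp
    qed
  qed
qed

(* Injectivity: if det f ~ det g, then det (f g^* ) ~ 1, so f g^* ~ 1 and f ~ g. *)
lemma det_injective_on_classes:
  assumes f: "f \<in> EqMaps S2 antip U2 mu" and g: "g \<in> EqMaps S2 antip U2 mu"
    and hd: "eq_htpc S2 antip U1 cnj (\<lambda>k. det (f k)) (\<lambda>k. det (g k))"
  shows "eq_htpc S2 antip U2 mu f g"
proof -
  have gc: "continuous_on S2 g" and gU: "\<And>k. k \<in> S2 \<Longrightarrow> g k \<in> U2"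
    and ge: "\<And>k. k \<in> S2 \<Longrightarrow> g (antip k) = mu (g k)"
    using g by (auto simp: EqMaps_def)
  define F where "F k = f k ** adj (g k)" for k
  have "F \<in> EqMaps S2 antip U2 mu"
    using f gU ge unfolding EqMaps_def F_def
    by (auto intro!: continuous_intros gc U2_mult U2_adj simp: mu_mult mu_adj)
  moreover have "eq_htpc S2 antip U1 cnj (\<lambda>k. det (F k)) (\<lambda>k. 1)"
  proof -
    have htp: "eq_htpc S2 antip U1 cnj (\<lambda>k. det (f k) * cnj (det (g k))) (\<lambda>k. det (g k) * cnj (det (g k)))"
      using hd by (rule eq_htpc_pointwise[OF antip_image_S2])
        (use det_U2[OF gU] ge in \<open>auto intro!: continuous_intros continuous_on_compose_fst gc
           simp: U1_def norm_mult det_mu\<close>)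
    have unit: "det (g k) * cnj (det (g k)) = 1" if "k \<in> S2" for k
      using det_U2[OF gU[OF that]] complex_norm_square[of "det (g k)"] by (simp add: U1_def)
    show ?thesis
      using htp by (rule eq_htpc_cong[OF antip_image_S2]) (simp_all add: F_def det_mul det_adj unit)
  qed
  ultimately have "eq_htpc S2 antip U2 mu F (\<lambda>k. mat 1)"
    by (rule trivial_det_imp_nullhomotopic)
  then have "eq_htpc S2 antip U2 mu (\<lambda>k. F k ** g k) (\<lambda>k. mat 1 ** g k)"
    by (rule eq_htpc_pointwise[OF antip_image_S2])
       (use gU ge in \<open>auto intro!: continuous_intros continuous_on_compose_fst gc U2_mult simp: mu_mult\<close>)
  then show ?thesis
    by (rule eq_htpc_cong[OF antip_image_S2])
       (use gU in \<open>simp_all add: F_def matrix_mul_assoc[symmetric] U2_adj_mult\<close>)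
qed

definition pauli :: "real^3 \<Rightarrow> complex^2^2" where
  "pauli k = mat2 (of_real (k$3)) (of_real (k$1) - \<i> * of_real (k$2))
                  (of_real (k$1) + \<i> * of_real (k$2)) (- of_real (k$3))"

lemma S2_coordinates_complex:
  "k \<in> S2 \<Longrightarrow> of_real (k$1) * of_real (k$1) + of_real (k$2) * of_real (k$2) + of_real (k$3) * of_real (k$3) = (1::complex)"
proof -
  assume "k \<in> S2"
  then have "complex_of_real ((k$1)^2 + (k$2)^2 + (k$3)^2) = 1" by (simp add: S2_coordinates)
  then show ?thesis by (simp add: power2_eq_square)
qed

lemma pauli_equivariant: "pauli \<in> EqMaps S2 antip U2 mu"
proof -
  have "continuous_on S2 pauli" unfolding pauli_def by (intro continuous_intros)
  moreover have "pauli k \<in> U2" if "k \<in> S2" for k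
    using S2_coordinates_complex[OF that] unfolding pauli_def U2_mat2 by (simp add: algebra_simps)
  moreover have "pauli (antip k) = mu (pauli k)" for k
    by (simp add: pauli_def antip_def mu_mat2)
  ultimately show ?thesis unfolding EqMaps_def by auto
qed

lemma det_pauli: "k \<in> S2 \<Longrightarrow> det (pauli k) = -1"
  using S2_coordinates_complex unfolding pauli_def det_mat2 by (simp add: algebra_simps)

(* Surjectivity: the classes of 1 and -1 are the determinants of the constant map 1 and
   of the Pauli map. *)
lemma det_surjective_on_classes:
  assumes h: "h \<in> EqMaps S2 antip U1 cnj"
  shows "\<exists>f\<in>EqMaps S2 antip U2 mu. eq_htpc S2 antip U1 cnj h (\<lambda>k. det (f k))"
proof (cases "eq_htpc S2 antip U1 cnj h (\<lambda>k. 1)")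
  case True
  moreover have "(\<lambda>k. mat 1) \<in> EqMaps S2 antip U2 mu"
    unfolding EqMaps_def using one_U2 by (auto simp: one_mat2 mu_mat2)
  ultimately show ?thesis by (intro bexI[of _ "\<lambda>k. mat 1"]) (simp_all add: det_one)
next
  case False
  then have "eq_htpc S2 antip U1 cnj h (\<lambda>k. -1)" using S2_circle_maps_classified[OF h] by blast
  then have "eq_htpc S2 antip U1 cnj h (\<lambda>k. det (pauli k))"
    by (rule eq_htpc_cong[OF antip_image_S2]) (simp_all add: det_pauli)
  then show ?thesis using pauli_equivariant by blast
qed

theorem mainTheorem12:
  shows "(\<forall>f\<in>EqMaps S2 antip U2 mu. (\<lambda>k. det (f k)) \<in> EqMaps S2 antip U1 cnj) \<and>
    (\<forall>f\<in>EqMaps S2 antip U2 mu. \<forall>g\<in>EqMaps S2 antip U2 mu.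
        eq_htpc S2 antip U2 mu f g \<longrightarrow>
        eq_htpc S2 antip U1 cnj (\<lambda>k. det (f k)) (\<lambda>k. det (g k))) \<and>
    (\<forall>f\<in>EqMaps S2 antip U2 mu. \<forall>g\<in>EqMaps S2 antip U2 mu.
        (\<lambda>k. f k ** g k) \<in> EqMaps S2 antip U2 mu \<and>
        (\<forall>k. det (f k ** g k) = det (f k) * det (g k))) \<and>
    (\<forall>f\<in>EqMaps S2 antip U2 mu. \<forall>g\<in>EqMaps S2 antip U2 mu.
        eq_htpc S2 antip U1 cnj (\<lambda>k. det (f k)) (\<lambda>k. det (g k)) \<longrightarrow>
        eq_htpc S2 antip U2 mu f g) \<and>
    (\<forall>h\<in>EqMaps S2 antip U1 cnj. \<exists>f\<in>EqMaps S2 antip U2 mu.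
        eq_htpc S2 antip U1 cnj h (\<lambda>k. det (f k))) \<and>
    (\<lambda>k. 1) \<in> EqMaps S2 antip U1 cnj \<and> (\<lambda>k. -1) \<in> EqMaps S2 antip U1 cnj \<and>
    (\<forall>h\<in>EqMaps S2 antip U1 cnj.
        eq_htpc S2 antip U1 cnj h (\<lambda>k. 1) \<or> eq_htpc S2 antip U1 cnj h (\<lambda>k. -1)) \<and>
    \<not> eq_htpc S2 antip U1 cnj (\<lambda>k. 1) (\<lambda>k. -1)"
  using det_equivariant det_preserves_eq_htpc equivariant_product det_mul det_injective_on_classes
    det_surjective_on_classes sign_constants_equivariant S2_circle_maps_classified
    S2_sign_constants_not_homotopic
  by blast

end
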